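(* Consider the noiseless setting and assume in addition that $\mathbf X$ is i.i.d. Given reads $x_1^\ell(1),x_1^\ell(2)$, let $t_+$ be the largest $t\in[\ell]$ with $x_{\ell-t+1}^\ell(1)=x_1^t(2)$ ($t_+:=0$ if none), and $t_-$ the largest $t\in[\ell-1]$ with $x_{\ell-t+1}^\ell(2)=x_1^t(1)$ ($t_-:=0$ if none). Let $\Gamma_+(t):=1/P_{X_1^t}(x_1^t(2))$, $\Gamma_-(t):=1/P_{X_1^t}(x_1^t(1))$ for $t\ge1$, and $\Gamma_\pm(0):=1$. Then the rule \[ \hat T_{\mathrm{MAP}}(x_1^\ell(1),x_1^\ell(2))=\begin{cases}t_+,&\Gamma_+(t_+)\ge\max\{\Gamma_-(t_-),n_\ell\},\\ -t_-,&\Gamma_-(t_-)\ge\max\{\Gamma_+(t_+),n_\ell\},\\ 0,&\text{otherwise}\end{cases} \] is a maximum a posteriori (hence Bayes-optimal) detector of $T$.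
   Context: Setting. $\mathcal X$ finite alphabet; $\mathbf X=\{X_i\}_{i\in\mathbb Z}$ a random process on $\mathcal X$ (here i.i.d.). Fix $\beta>0$; $\ell=\beta\log n$ (integer), $n_\ell:=n-(2\ell-1)$. $I(1)\sim\mathrm{Uniform}[n]$; conditionally on $I(1)$, $I(2)$ is uniform on $I(1)+\{-\ell+1,\dots,n-\ell\}$ if $1\le I(1)\le\ell-1$, uniform on $[n]$ if $\ell\le I(1)\le n-\ell+1$, uniform on $I(1)+\{\ell-n,\dots,\ell-1\}$ if $n-\ell+2\le I(1)\le n$; independent of $\mathbf X$. Reads $X_1^\ell(j):=X_{I(j)}^{I(j)+\ell-1}$. Signed overlap $T:=\max\{0,\ell-(I(2)-I(1))\}$ if $I(2)\ge I(1)$, else $T:=-\max\{0,\ell-(I(1)-I(2))\}$; values in $\{-(\ell-1),\dots,\ell\}$ with $\mathbb P[T=0]=n_\ell/n$ and $\mathbb P[T=t]=1/n$ for $t\ne0$. Noiseless setting: reads are observed exactly. A MAP detector maps the observed reads to a maximizer over $t$ of $\mathbb P[T=t]\cdot\mathbb P[X_1^\ell(1)=x_1^\ell(1),X_1^\ell(2)=x_1^\ell(2)\mid T=t]$. *)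

theory Defs
  imports "HOL-Probability.Probability"
begin

definition read :: "(int \<Rightarrow> 'a) \<Rightarrow> int \<Rightarrow> nat \<Rightarrow> 'a list" where
  "read X i l = map (\<lambda>k. X (i + int k)) [0..<l]"

(* Finitely many i.i.d. coordinates X_j ~ p, j in A (restriction of the i.i.d. process to A) *)
definition iid_window :: "'a pmf \<Rightarrow> int set \<Rightarrow> (int \<Rightarrow> 'a) pmf" where
  "iid_window p A = Pi_pmf A undefined (\<lambda>_. p)"

definition block_prob :: "'a pmf \<Rightarrow> 'a list \<Rightarrow> real" where
  "block_prob p w =
     measure_pmf.prob (map_pmf (\<lambda>X. read X 1 (length w)) (iid_window p {1..int (length w)})) {w}"

(* Support of I(2) given I(1) = i1 *)
definition I2_set :: "nat \<Rightarrow> nat \<Rightarrow> int \<Rightarrow> int set" where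
  "I2_set n l i1 =
     (if 1 \<le> i1 \<and> i1 \<le> int l - 1 then (\<lambda>j. i1 + j) ` {- int l + 1 .. int n - int l}
      else if int l \<le> i1 \<and> i1 \<le> int n - int l + 1 then {1 .. int n}
      else (\<lambda>j. i1 + j) ` {int l - int n .. int l - 1})"

definition signed_overlap :: "nat \<Rightarrow> int \<Rightarrow> int \<Rightarrow> int" where
  "signed_overlap l i1 i2 =
     (if i2 \<ge> i1 then max 0 (int l - (i2 - i1)) else - max 0 (int l - (i1 - i2)))"

(* Window of indices containing every position touched by either read *)
definition index_window :: "nat \<Rightarrow> nat \<Rightarrow> int set" where
  "index_window n l = {- int l .. int n + 2 * int l}"

definition joint :: "'a pmf \<Rightarrow> nat \<Rightarrow> nat \<Rightarrow> (int \<times> 'a list \<times> 'a list) pmf" where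
  "joint p n l =
     do { i1 \<leftarrow> pmf_of_set {1 .. int n};
          i2 \<leftarrow> pmf_of_set (I2_set n l i1);
          X \<leftarrow> iid_window p (index_window n l);
          return_pmf (signed_overlap l i1 i2, read X i1 l, read X i2 l) }"

definition MAP_objective :: "'a pmf \<Rightarrow> nat \<Rightarrow> nat \<Rightarrow> int \<Rightarrow> 'a list \<Rightarrow> 'a list \<Rightarrow> real" where
  "MAP_objective p n l t x1 x2 =
     (let PT = measure_pmf.prob (joint p n l) {z. fst z = t}
      in PT * (measure_pmf.prob (joint p n l) {(t, x1, x2)} / PT))"

definition is_MAP_detector ::
  "'a pmf \<Rightarrow> nat \<Rightarrow> nat \<Rightarrow> ('a list \<Rightarrow> 'a list \<Rightarrow> int) \<Rightarrow> bool" where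
  "is_MAP_detector p n l d \<longleftrightarrow>
     (\<forall>x1 x2. length x1 = l \<and> length x2 = l \<longrightarrow>
        d x1 x2 \<in> {- (int l - 1) .. int l} \<and>
        (\<forall>t \<in> {- (int l - 1) .. int l}.
            MAP_objective p n l t x1 x2 \<le> MAP_objective p n l (d x1 x2) x1 x2))"

definition t_plus :: "nat \<Rightarrow> 'a list \<Rightarrow> 'a list \<Rightarrow> nat" where
  "t_plus l x1 x2 = Max ({t \<in> {1..l}. drop (l - t) x1 = take t x2} \<union> {0})"

definition t_minus :: "nat \<Rightarrow> 'a list \<Rightarrow> 'a list \<Rightarrow> nat" where
  "t_minus l x1 x2 = Max ({t \<in> {1..l-1}. drop (l - t) x2 = take t x1} \<union> {0})"

definition Gamma_plus :: "'a pmf \<Rightarrow> 'a list \<Rightarrow> nat \<Rightarrow> real" where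
  "Gamma_plus p x2 t = (if t = 0 then 1 else 1 / block_prob p (take t x2))"

definition Gamma_minus :: "'a pmf \<Rightarrow> 'a list \<Rightarrow> nat \<Rightarrow> real" where
  "Gamma_minus p x1 t = (if t = 0 then 1 else 1 / block_prob p (take t x1))"

definition T_MAP_rule :: "'a pmf \<Rightarrow> nat \<Rightarrow> nat \<Rightarrow> 'a list \<Rightarrow> 'a list \<Rightarrow> int" where
  "T_MAP_rule p n l x1 x2 =
     (let tp = t_plus l x1 x2; tm = t_minus l x1 x2;
          gp = Gamma_plus p x2 tp; gm = Gamma_minus p x1 tm;
          nl = real n - (2 * real l - 1)
      in if gp \<ge> max gm nl then int tp
         else if gm \<ge> max gp nl then - int tm
         else 0)"

end

theory Submission
  imports Defs
begin

(*
  Reads at signed overlap t > 0 are the two length-l windows of one contiguous word, which must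
  be x1 @ drop t x2 (the reads have to agree on the overlap); for t = 0 they sit on disjoint
  positions. By independence, P[T = t] P[reads | T = t] is therefore P(x1) P(x2) / n times a
  score equal to n_l at t = 0 and to Gamma_+(t), resp. Gamma_-(-t), at consistent overlaps,
  where P is the i.i.d. word probability. Symbol probabilities are at most 1, so Gamma_+ and
  Gamma_- grow with the overlap: only t_+, -t_- and 0 compete, and the rule picks the best of
  them. The one delicate tie, t_+ = 0 with Gamma_-(t_-) = 1 = Gamma_+(0), forces a one-point
  symbol distribution, hence identical reads and t_+ = l.
*)

lemma prod_list_map_eq_prod_nth:
  "prod_list (map f w) = (\<Prod>k<length w. f (w ! k))"
  by (induction w) (simp_all add: prod.lessThan_Suc_shift del: prod.lessThan_Suc)

lemma length_read [simp]: "length (read X i l) = l"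
  by (simp add: read_def)

lemma take_read: "take a (read X i b) = read X i (min a b)"
  by (simp add: read_def list_eq_iff_nth_eq)

lemma drop_read: "drop a (read X i b) = read X (i + int a) (b - a)"
  by (auto simp: read_def list_eq_iff_nth_eq ac_simps)

lemma read_eq_iff:
  "read X i (length w) = w \<longleftrightarrow> (\<forall>j\<in>{i..<i + int (length w)}. X j = w ! nat (j - i))"
proof -
  have "read X i (length w) = w \<longleftrightarrow> (\<forall>k<length w. X (i + int k) = w ! k)"
    unfolding read_def list_eq_iff_nth_eq by auto
  also have "\<dots> \<longleftrightarrow> (\<forall>j\<in>{i..<i + int (length w)}. X j = w ! nat (j - i))"
  proof safe
    fix j assume X: "\<forall>k<length w. X (i + int k) = w ! k" and j: "j \<in> {i..<i + int (length w)}"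
    from j have "nat (j - i) < length w" "i + int (nat (j - i)) = j"
      by auto
    with X show "X j = w ! nat (j - i)"
      by metis
  qed force
  finally show ?thesis .
qed

lemma prod_read_interval:
  "(\<Prod>j\<in>{i..<i + int (length w)}. f (w ! nat (j - i))) = prod_list (map f w)"
proof -
  have "(\<Prod>j\<in>{i..<i + int (length w)}. f (w ! nat (j - i))) = (\<Prod>k<length w. f (w ! k))"
    by (rule prod.reindex_bij_witness[of _ "\<lambda>k. i + int k" "\<lambda>j. nat (j - i)"]) auto
  then show ?thesis by (simp add: prod_list_map_eq_prod_nth)
qed

lemma overlapping_lists_iff:
  assumes "length r = d + l" "length x1 = l" "length x2 = l" "d \<le> l"
  shows "(take l r = x1 \<and> drop d r = x2) \<longleftrightarrow> (drop d x1 = take (l - d) x2 \<and> r = x1 @ drop (l - d) x2)"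
proof
  assume "take l r = x1 \<and> drop d r = x2"
  then have "drop d x1 = take (l - d) x2" "drop l r = drop (l - d) x2"
    using assms by (metis drop_take, metis drop_drop le_add_diff_inverse2)
  then show "drop d x1 = take (l - d) x2 \<and> r = x1 @ drop (l - d) x2"
    using \<open>take l r = x1 \<and> drop d r = x2\<close> by (metis append_take_drop_id)
next
  assume "drop d x1 = take (l - d) x2 \<and> r = x1 @ drop (l - d) x2"
  then show "take l r = x1 \<and> drop d r = x2"
    using assms by simp
qed

lemma measure_Pi_pmf_agree:
  assumes "finite W" "S \<subseteq> W"
  shows "measure_pmf.prob (Pi_pmf W d (\<lambda>_. p)) {X. \<forall>j\<in>S. X j = f j} = (\<Prod>j\<in>S. pmf p (f j))"
proof -
  have "{X. \<forall>j\<in>S. X j = f j} = Pi W (\<lambda>j. if j \<in> S then {f j} else UNIV)"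
    using assms(2) by (auto simp: Pi_def)
  then have "measure_pmf.prob (Pi_pmf W d (\<lambda>_. p)) {X. \<forall>j\<in>S. X j = f j}
      = (\<Prod>j\<in>W. if j \<in> S then pmf p (f j) else 1)"
    by (simp add: measure_Pi_pmf_Pi[OF assms(1)] if_distrib measure_pmf_single cong: if_cong)
  also have "\<dots> = (\<Prod>j\<in>S. pmf p (f j))"
    using assms by (simp add: prod.If_cases Int_absorb1)
  finally show ?thesis .
qed

lemma measure_Pi_pmf_read:
  assumes "finite W" "{i..<i + int (length w)} \<subseteq> W"
  shows "measure_pmf.prob (Pi_pmf W d (\<lambda>_. p)) {X. read X i (length w) = w} = prod_list (map (pmf p) w)"
  unfolding read_eq_iff by (simp add: measure_Pi_pmf_agree[OF assms] prod_read_interval)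

lemma measure_Pi_pmf_disjoint_reads:
  assumes W: "finite W" "{i1..<i1 + int (length u)} \<subseteq> W" "{i2..<i2 + int (length v)} \<subseteq> W"
    and disj: "{i1..<i1 + int (length u)} \<inter> {i2..<i2 + int (length v)} = {}"
  shows "measure_pmf.prob (Pi_pmf W d (\<lambda>_. p)) {X. read X i1 (length u) = u \<and> read X i2 (length v) = v}
    = prod_list (map (pmf p) u) * prod_list (map (pmf p) v)"
proof -
  define S1 where "S1 = {i1..<i1 + int (length u)}"
  define S2 where "S2 = {i2..<i2 + int (length v)}"
  define f where "f j = (if j \<in> S1 then u ! nat (j - i1) else v ! nat (j - i2))" for j
  have "S1 \<inter> S2 = {}"
    using disj by (simp add: S1_def S2_def)
  then have "(read X i1 (length u) = u \<and> read X i2 (length v) = v) \<longleftrightarrow> (\<forall>j\<in>S1 \<union> S2. X j = f j)" for X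
    unfolding read_eq_iff S1_def[symmetric] S2_def[symmetric] f_def by auto
  then have "{X. read X i1 (length u) = u \<and> read X i2 (length v) = v} = {X. \<forall>j\<in>S1 \<union> S2. X j = f j}"
    by simp
  then have "measure_pmf.prob (Pi_pmf W d (\<lambda>_. p)) {X. read X i1 (length u) = u \<and> read X i2 (length v) = v}
      = (\<Prod>j\<in>S1. pmf p (f j)) * (\<Prod>j\<in>S2. pmf p (f j))"
    using W disj by (simp add: measure_Pi_pmf_agree prod.union_disjoint S1_def S2_def)
  also have "(\<Prod>j\<in>S1. pmf p (f j)) = prod_list (map (pmf p) u)"
    by (simp add: f_def S1_def prod_read_interval)
  also have "(\<Prod>j\<in>S2. pmf p (f j)) = (\<Prod>j\<in>S2. pmf p (v ! nat (j - i2)))"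
    using \<open>S1 \<inter> S2 = {}\<close> by (intro prod.cong) (auto simp: f_def)
  also have "\<dots> = prod_list (map (pmf p) v)"
    by (simp add: S2_def prod_read_interval)
  finally show ?thesis .
qed

lemma measure_Pi_pmf_overlapping_reads:
  assumes W: "finite W" "{i..<i + int (d + l)} \<subseteq> W"
    and len: "d \<le> l" "length x1 = l" "length x2 = l"
  shows "measure_pmf.prob (Pi_pmf W dflt (\<lambda>_. p)) {X. read X i l = x1 \<and> read X (i + int d) l = x2}
    = (if drop d x1 = take (l - d) x2 then prod_list (map (pmf p) (x1 @ drop (l - d) x2)) else 0)"
proof -
  have "(read X i l = x1 \<and> read X (i + int d) l = x2)
      \<longleftrightarrow> (drop d x1 = take (l - d) x2 \<and> read X i (d + l) = x1 @ drop (l - d) x2)" for X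
    using overlapping_lists_iff[OF length_read len(2,3,1)] by (simp add: take_read drop_read)
  then have "{X. read X i l = x1 \<and> read X (i + int d) l = x2}
      = {X. drop d x1 = take (l - d) x2 \<and> read X i (d + l) = x1 @ drop (l - d) x2}"
    by simp
  moreover have "length (x1 @ drop (l - d) x2) = d + l"
    using len by simp
  ultimately show ?thesis
    using measure_Pi_pmf_read[OF W(1), of i "x1 @ drop (l - d) x2" dflt p] W(2) by auto
qed

lemma block_prob_eq_prod_list: "block_prob p w = prod_list (map (pmf p) w)"
proof -
  have "block_prob p w = measure_pmf.prob (Pi_pmf {1..int (length w)} undefined (\<lambda>_. p))
      {X. read X 1 (length w) = w}"
    by (simp add: block_prob_def iid_window_def measure_map_pmf vimage_def)
  also have "\<dots> = prod_list (map (pmf p) w)"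
    by (rule measure_Pi_pmf_read) auto
  finally show ?thesis .
qed

lemma block_prob_Nil [simp]: "block_prob p [] = 1"
  and block_prob_append: "block_prob p (u @ v) = block_prob p u * block_prob p v"
  by (simp_all add: block_prob_eq_prod_list)

lemma block_prob_Cons [simp]: "block_prob p (a # w) = pmf p a * block_prob p w"
  by (simp add: block_prob_eq_prod_list)

lemma block_prob_nonneg: "0 \<le> block_prob p w"
  by (induction w) simp_all

lemma block_prob_le_1: "block_prob p w \<le> 1"
  by (induction w) (simp_all add: mult_le_one pmf_le_1 block_prob_nonneg)

lemma block_prob_pos_iff: "0 < block_prob p w \<longleftrightarrow> set w \<subseteq> set_pmf p"
  by (induction w) (auto simp: zero_less_mult_iff pmf_positive_iff block_prob_nonneg pmf_positive)

lemma block_prob_pos: "set w \<subseteq> set_pmf p \<Longrightarrow> 0 < block_prob p w"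
  by (simp add: block_prob_pos_iff)

lemma block_prob_take_antimono:
  assumes "t \<le> t'"
  shows "block_prob p (take t' w) \<le> block_prob p (take t w)"
proof -
  have "take t' w = take t w @ take (t' - t) (drop t w)"
    using assms by (metis le_add_diff_inverse take_add)
  then show ?thesis
    by (simp add: block_prob_append block_prob_nonneg block_prob_le_1 mult_left_le)
qed

lemma block_prob_overlap_append:
  assumes "drop (length u - k) u = take k v"
  shows "block_prob p (u @ drop k v) = block_prob p u * block_prob p v / block_prob p (take k v)"
proof -
  have u: "block_prob p u = block_prob p (take (length u - k) u) * block_prob p (take k v)"
    by (metis append_take_drop_id assms block_prob_append)
  have v: "block_prob p v = block_prob p (take k v) * block_prob p (drop k v)"
    by (metis append_take_drop_id block_prob_append)
  show ?thesis
    by (cases "block_prob p (take k v) = 0") (simp_all add: u v block_prob_append)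
qed

lemma block_prob_eq_1_imp_singleton:
  assumes "block_prob p (a # u) = 1" "set w \<subseteq> set_pmf p"
  shows "set w \<subseteq> {a}"
proof -
  have "pmf p a * block_prob p u = 1"
    using assms(1) by simp
  then have "1 \<le> pmf p a"
    using block_prob_le_1[of p u] by (metis mult_left_le pmf_nonneg order.trans)
  then have "measure_pmf.prob p {a} = 1"
    using pmf_le_1[of p a] by (simp add: measure_pmf_single)
  then have "set_pmf p \<subseteq> {a}"
    by (auto simp: measure_pmf.prob_eq_1 AE_measure_pmf_iff)
  then show ?thesis
    using assms(2) by blast
qed

lemma Gamma_plus_eq: "Gamma_plus p w t = 1 / block_prob p (take t w)"
  and Gamma_minus_eq: "Gamma_minus p w t = 1 / block_prob p (take t w)"
  by (simp_all add: Gamma_plus_def Gamma_minus_def)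

lemma inverse_block_prob_take_mono:
  assumes "set w \<subseteq> set_pmf p" "t \<le> t'"
  shows "1 / block_prob p (take t w) \<le> 1 / block_prob p (take t' w)"
proof -
  have pos: "0 < block_prob p (take t' w)"
    by (rule block_prob_pos[OF order_trans[OF set_take_subset assms(1)]])
  also have "\<dots> \<le> block_prob p (take t w)"
    by (rule block_prob_take_antimono[OF assms(2)])
  finally show ?thesis
    using pos by (intro divide_left_mono block_prob_take_antimono assms(2)) simp_all
qed

lemma one_le_inverse_block_prob:
  assumes "set w \<subseteq> set_pmf p"
  shows "1 \<le> 1 / block_prob p w"
  using block_prob_pos[OF assms] block_prob_le_1[of p w] by simp

definition reads_likelihood :: "'a pmf \<Rightarrow> nat \<Rightarrow> 'a list \<Rightarrow> 'a list \<Rightarrow> int \<Rightarrow> real" where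
  "reads_likelihood p l x1 x2 t =
     (if t > 0 then
        (if drop (l - nat t) x1 = take (nat t) x2 then block_prob p (x1 @ drop (nat t) x2) else 0)
      else if t < 0 then
        (if drop (l - nat (- t)) x2 = take (nat (- t)) x1 then block_prob p (x2 @ drop (nat (- t)) x1) else 0)
      else block_prob p x1 * block_prob p x2)"

lemma measure_Pi_pmf_reads:
  assumes W: "finite W" "{i1..<i1 + int l} \<subseteq> W" "{i2..<i2 + int l} \<subseteq> W"
    and len: "length x1 = l" "length x2 = l"
  shows "measure_pmf.prob (Pi_pmf W d (\<lambda>_. p)) {X. read X i1 l = x1 \<and> read X i2 l = x2}
    = reads_likelihood p l x1 x2 (signed_overlap l i1 i2)"
proof -
  consider (plus) "i1 \<le> i2" "i2 - i1 < int l" | (minus) "i2 < i1" "i1 - i2 < int l"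
    | (apart) "int l \<le> \<bar>i2 - i1\<bar>"
    by linarith
  then show ?thesis
  proof cases
    case plus
    define k where "k = nat (i2 - i1)"
    have "i2 = i1 + int k" "k \<le> l" "nat (signed_overlap l i1 i2) = l - k" "signed_overlap l i1 i2 > 0"
      using plus by (auto simp: k_def signed_overlap_def)
    moreover have "{i1..<i1 + int (k + l)} \<subseteq> {i1..<i1 + int l} \<union> {i2..<i2 + int l}"
      using plus by (auto simp: k_def)
    then have "{i1..<i1 + int (k + l)} \<subseteq> W"
      using W by blast
    ultimately show ?thesis
      using measure_Pi_pmf_overlapping_reads[OF W(1) _ _ len, of i1 k]
      by (simp add: reads_likelihood_def block_prob_eq_prod_list)
  next
    case minus
    define k where "k = nat (i1 - i2)"
    have "i1 = i2 + int k" "k \<le> l" "nat (- signed_overlap l i1 i2) = l - k" "signed_overlap l i1 i2 < 0"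
      using minus by (auto simp: k_def signed_overlap_def)
    moreover have "{i2..<i2 + int (k + l)} \<subseteq> {i1..<i1 + int l} \<union> {i2..<i2 + int l}"
      using minus by (auto simp: k_def)
    then have "{i2..<i2 + int (k + l)} \<subseteq> W"
      using W by blast
    ultimately show ?thesis
      using measure_Pi_pmf_overlapping_reads[OF W(1) _ _ len(2,1), of i2 k]
      by (simp add: reads_likelihood_def block_prob_eq_prod_list conj_commute)
  next
    case apart
    then have "signed_overlap l i1 i2 = 0"
      by (auto simp: signed_overlap_def)
    moreover have "{i1..<i1 + int l} \<inter> {i2..<i2 + int l} = {}"
      using apart by auto
    ultimately show ?thesis
      using measure_Pi_pmf_disjoint_reads[of W i1 x1 i2 x2] W len
      by (simp add: reads_likelihood_def block_prob_eq_prod_list)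
  qed
qed

lemma finite_I2_set: "finite (I2_set n l i1)"
  by (simp add: I2_set_def)

lemma card_I2_set: "card (I2_set n l i1) = n"
proof -
  have "inj_on (\<lambda>j. i1 + j) A" for A :: "int set"
    by (simp add: inj_on_def)
  then show ?thesis
    by (simp add: I2_set_def card_image)
qed

lemma I2_set_subset:
  assumes "1 \<le> l" "i1 \<in> {1..int n}"
  shows "I2_set n l i1 \<subseteq> {2 - int l .. int n + int l - 1}"
  using assms by (auto simp: I2_set_def)

lemma neighbourhood_subset_I2_set:
  assumes "2 * l - 1 \<le> n" "i1 \<in> {1..int n}"
  shows "{i1 - (int l - 1) .. i1 + (int l - 1)} \<subseteq> I2_set n l i1"
proof
  fix i2 assume "i2 \<in> {i1 - (int l - 1) .. i1 + (int l - 1)}"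
  then show "i2 \<in> I2_set n l i1"
    using assms unfolding I2_set_def by (auto intro!: image_eqI[where x = "i2 - i1"])
qed

lemma signed_overlap_eq_iff:
  assumes "t \<noteq> 0" "- int l < t" "t \<le> int l"
  shows "signed_overlap l i1 i2 = t \<longleftrightarrow> i2 = i1 + sgn t * (int l - \<bar>t\<bar>)"
  using assms by (auto simp: signed_overlap_def sgn_if)

lemma signed_overlap_eq_0_iff:
  "signed_overlap l i1 i2 = 0 \<longleftrightarrow> i2 \<notin> {i1 - (int l - 1) .. i1 + (int l - 1)}"
  by (auto simp: signed_overlap_def)

lemma card_signed_overlap_eq:
  assumes "1 \<le> l" "2 * l - 1 \<le> n" "i1 \<in> {1..int n}" "t \<in> {- (int l - 1) .. int l}"
  shows "card {i2 \<in> I2_set n l i1. signed_overlap l i1 i2 = t} = (if t = 0 then n - (2 * l - 1) else 1)"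
proof (cases "t = 0")
  case True
  let ?B = "{i1 - (int l - 1) .. i1 + (int l - 1)}"
  have "{i2 \<in> I2_set n l i1. signed_overlap l i1 i2 = t} = I2_set n l i1 - ?B"
    using True signed_overlap_eq_0_iff by blast
  moreover have "card ?B = 2 * l - 1"
    using assms(1) by simp
  ultimately show ?thesis
    using True card_Diff_subset[OF _ neighbourhood_subset_I2_set[OF assms(2,3)]]
    by (simp add: card_I2_set finite_I2_set)
next
  case False
  let ?i2 = "i1 + sgn t * (int l - \<bar>t\<bar>)"
  have "?i2 \<in> I2_set n l i1"
    using neighbourhood_subset_I2_set[OF assms(2,3)] assms(4) False by (auto simp: sgn_if)
  then have "{i2 \<in> I2_set n l i1. signed_overlap l i1 i2 = t} = {?i2}"
    using signed_overlap_eq_iff[OF False] assms(4) by auto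
  then show ?thesis
    using False by simp
qed

lemma pmf_joint:
  assumes l: "1 \<le> l" "2 * l - 1 \<le> n" and len: "length x1 = l" "length x2 = l"
    and t: "t \<in> {- (int l - 1) .. int l}"
  shows "pmf (joint p n l) (t, x1, x2)
    = real (if t = 0 then n - (2 * l - 1) else 1) / real n * reads_likelihood p l x1 x2 t"
proof -
  let ?L = "reads_likelihood p l x1 x2 t"
  let ?c = "real (if t = 0 then n - (2 * l - 1) else 1)"
  have n: "n > 0"
    using l by linarith
  have reads: "pmf (map_pmf (\<lambda>X. (signed_overlap l i1 i2, read X i1 l, read X i2 l))
      (iid_window p (index_window n l))) (t, x1, x2) = (if signed_overlap l i1 i2 = t then ?L else 0)"
    if "i1 \<in> {1..int n}" "i2 \<in> I2_set n l i1" for i1 i2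
  proof -
    have "{i1..<i1 + int l} \<subseteq> index_window n l" "{i2..<i2 + int l} \<subseteq> index_window n l"
      using that I2_set_subset[OF l(1) that(1)] by (auto simp: index_window_def)
    then show ?thesis
      using measure_Pi_pmf_reads[OF _ _ _ len]
      by (auto simp: pmf_map vimage_def iid_window_def index_window_def)
  qed
  have inner: "measure_pmf.expectation (pmf_of_set (I2_set n l i1))
      (\<lambda>i2. pmf (map_pmf (\<lambda>X. (signed_overlap l i1 i2, read X i1 l, read X i2 l))
        (iid_window p (index_window n l))) (t, x1, x2)) = ?c * ?L / real n"
    if i1: "i1 \<in> {1..int n}" for i1
  proof -
    have "I2_set n l i1 \<noteq> {}"
      using card_I2_set[of n l i1] n by auto
    then have "measure_pmf.expectation (pmf_of_set (I2_set n l i1))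
      (\<lambda>i2. pmf (map_pmf (\<lambda>X. (signed_overlap l i1 i2, read X i1 l, read X i2 l))
        (iid_window p (index_window n l))) (t, x1, x2))
      = (\<Sum>i2\<in>I2_set n l i1. if signed_overlap l i1 i2 = t then ?L else 0) / real n"
      by (simp add: integral_pmf_of_set finite_I2_set card_I2_set reads[OF i1])
    also have "\<dots> = ?c * ?L / real n"
      using card_signed_overlap_eq[OF l i1 t] finite_I2_set by (simp flip: sum.inter_filter)
    finally show ?thesis .
  qed
  have "pmf (joint p n l) (t, x1, x2) = (\<Sum>i1\<in>{1..int n}. ?c * ?L / real n) / real n"
    unfolding joint_def map_pmf_def[symmetric] using n
    by (simp add: pmf_bind integral_pmf_of_set inner)
  also have "\<dots> = ?c / real n * ?L"
    by simp
  finally show ?thesis .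
qed

lemma MAP_objective_eq_pmf: "MAP_objective p n l t x1 x2 = pmf (joint p n l) (t, x1, x2)"
proof -
  let ?PT = "measure_pmf.prob (joint p n l) {z. fst z = t}"
  have "pmf (joint p n l) (t, x1, x2) \<le> ?PT"
    unfolding measure_pmf_single[symmetric] by (rule measure_pmf.finite_measure_mono) auto
  then show ?thesis
    by (cases "?PT = 0") (simp_all add: MAP_objective_def measure_pmf_single order_antisym)
qed

(* The MAP objective rescaled by n / (P(x1) P(x2)): the paper's Gamma_+(t) resp. Gamma_-(-t)
   at overlaps consistent with the reads, and n_l at T = 0. *)
definition MAP_score :: "'a pmf \<Rightarrow> nat \<Rightarrow> nat \<Rightarrow> 'a list \<Rightarrow> 'a list \<Rightarrow> int \<Rightarrow> real" where
  "MAP_score p n l x1 x2 t =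
     (if t > 0 then
        (if drop (l - nat t) x1 = take (nat t) x2 then Gamma_plus p x2 (nat t) else 0)
      else if t < 0 then
        (if drop (l - nat (- t)) x2 = take (nat (- t)) x1 then Gamma_minus p x1 (nat (- t)) else 0)
      else real n - (2 * real l - 1))"

lemma MAP_objective_eq_MAP_score:
  assumes l: "1 \<le> l" "2 * l - 1 \<le> n" and len: "length x1 = l" "length x2 = l"
    and t: "t \<in> {- (int l - 1) .. int l}"
  shows "MAP_objective p n l t x1 x2
    = block_prob p x1 * block_prob p x2 * MAP_score p n l x1 x2 t / real n"
proof -
  have "real (n - (2 * l - 1)) = real n - (2 * real l - 1)"
    using l by (simp add: of_nat_diff)
  then show ?thesis
    using block_prob_overlap_append[of x1 "nat t" x2 p] block_prob_overlap_append[of x2 "nat (- t)" x1 p]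
    by (simp add: MAP_objective_eq_pmf pmf_joint[OF l len t] reads_likelihood_def MAP_score_def
        Gamma_plus_eq Gamma_minus_eq len mult.commute)
qed

lemma
  fixes P :: "nat \<Rightarrow> bool"
  shows Max_matches_le: "Max ({s \<in> {1..m}. P s} \<union> {0}) \<le> m"
    and Max_matches_cases: "Max ({s \<in> {1..m}. P s} \<union> {0}) = 0 \<or> P (Max ({s \<in> {1..m}. P s} \<union> {0}))"
    and le_Max_matches: "1 \<le> t \<Longrightarrow> t \<le> m \<Longrightarrow> P t \<Longrightarrow> t \<le> Max ({s \<in> {1..m}. P s} \<union> {0})"
proof -
  have "Max ({s \<in> {1..m}. P s} \<union> {0}) \<in> {s \<in> {1..m}. P s} \<union> {0}"
    by (rule Max_in) auto
  then show "Max ({s \<in> {1..m}. P s} \<union> {0}) \<le> m"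
    "Max ({s \<in> {1..m}. P s} \<union> {0}) = 0 \<or> P (Max ({s \<in> {1..m}. P s} \<union> {0}))"
    by auto
  show "1 \<le> t \<Longrightarrow> t \<le> m \<Longrightarrow> P t \<Longrightarrow> t \<le> Max ({s \<in> {1..m}. P s} \<union> {0})"
    by (rule Max_ge) auto
qed

lemma MAP_score_t_plus:
  "MAP_score p n l x1 x2 (int (t_plus l x1 x2))
    = (if t_plus l x1 x2 = 0 then real n - (2 * real l - 1) else Gamma_plus p x2 (t_plus l x1 x2))"
  using Max_matches_cases[of l "\<lambda>t. drop (l - t) x1 = take t x2"]
  by (auto simp: MAP_score_def t_plus_def)

lemma MAP_score_t_minus:
  "MAP_score p n l x1 x2 (- int (t_minus l x1 x2))
    = (if t_minus l x1 x2 = 0 then real n - (2 * real l - 1) else Gamma_minus p x1 (t_minus l x1 x2))"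
  using Max_matches_cases[of "l - 1" "\<lambda>t. drop (l - t) x2 = take t x1"]
  by (auto simp: MAP_score_def t_minus_def)

lemma MAP_score_le_t_plus:
  assumes supp: "set x2 \<subseteq> set_pmf p" and t: "0 < t" "t \<le> int l"
    and overlap: "drop (l - nat t) x1 = take (nat t) x2"
  shows "MAP_score p n l x1 x2 t \<le> MAP_score p n l x1 x2 (int (t_plus l x1 x2))"
proof -
  have le: "nat t \<le> t_plus l x1 x2"
    unfolding t_plus_def using t overlap by (intro le_Max_matches) auto
  then have "t_plus l x1 x2 \<noteq> 0"
    using t by linarith
  have "MAP_score p n l x1 x2 t = Gamma_plus p x2 (nat t)"
    using t overlap by (simp add: MAP_score_def)
  also have "\<dots> \<le> Gamma_plus p x2 (t_plus l x1 x2)"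
    unfolding Gamma_plus_eq by (rule inverse_block_prob_take_mono[OF supp le])
  also have "\<dots> = MAP_score p n l x1 x2 (int (t_plus l x1 x2))"
    using \<open>t_plus l x1 x2 \<noteq> 0\<close> by (simp add: MAP_score_t_plus)
  finally show ?thesis .
qed

lemma MAP_score_le_t_minus:
  assumes supp: "set x1 \<subseteq> set_pmf p" and t: "t < 0" "- t \<le> int l - 1"
    and overlap: "drop (l - nat (- t)) x2 = take (nat (- t)) x1"
  shows "MAP_score p n l x1 x2 t \<le> MAP_score p n l x1 x2 (- int (t_minus l x1 x2))"
proof -
  have le: "nat (- t) \<le> t_minus l x1 x2"
    unfolding t_minus_def using t overlap by (intro le_Max_matches) auto
  then have "t_minus l x1 x2 \<noteq> 0"
    using t by linarith
  have "MAP_score p n l x1 x2 t = Gamma_minus p x1 (nat (- t))"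
    using t overlap by (simp add: MAP_score_def)
  also have "\<dots> \<le> Gamma_minus p x1 (t_minus l x1 x2)"
    unfolding Gamma_minus_eq by (rule inverse_block_prob_take_mono[OF supp le])
  also have "\<dots> = MAP_score p n l x1 x2 (- int (t_minus l x1 x2))"
    using \<open>t_minus l x1 x2 \<noteq> 0\<close> by (simp add: MAP_score_t_minus)
  finally show ?thesis .
qed

lemma MAP_score_le_candidates:
  assumes n: "2 * l - 1 \<le> n" and supp: "set x1 \<subseteq> set_pmf p" "set x2 \<subseteq> set_pmf p"
    and t: "t \<in> {- (int l - 1) .. int l}"
  shows "MAP_score p n l x1 x2 t \<le> max (MAP_score p n l x1 x2 (int (t_plus l x1 x2)))
    (max (MAP_score p n l x1 x2 (- int (t_minus l x1 x2))) (MAP_score p n l x1 x2 0))"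
proof -
  let ?score = "MAP_score p n l x1 x2"
  have "0 \<le> ?score 0"
    using n by (cases l) (auto simp: MAP_score_def)
  then consider (plus) "0 < t" "drop (l - nat t) x1 = take (nat t) x2"
    | (minus) "t < 0" "drop (l - nat (- t)) x2 = take (nat (- t)) x1"
    | (other) "?score t \<le> ?score 0"
    by atomize_elim (auto simp: MAP_score_def)
  then show ?thesis
  proof cases
    case plus
    then show ?thesis
      using MAP_score_le_t_plus[OF supp(2)] t by (simp add: le_max_iff_disj)
  next
    case minus
    then show ?thesis
      using MAP_score_le_t_minus[OF supp(1)] t by (simp add: le_max_iff_disj)
  qed (simp add: le_max_iff_disj)
qed

lemma t_plus_neq_0_if_Gamma_minus_le_1:
  assumes len: "length x1 = l" "length x2 = l" and supp: "set x1 \<subseteq> set_pmf p" "set x2 \<subseteq> set_pmf p"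
    and tm: "t_minus l x1 x2 \<noteq> 0" and gm: "Gamma_minus p x1 (t_minus l x1 x2) \<le> 1"
  shows "t_plus l x1 x2 \<noteq> 0"
proof -
  let ?u = "take (t_minus l x1 x2) x1"
  have "t_minus l x1 x2 \<le> l - 1"
    unfolding t_minus_def by (rule Max_matches_le)
  then obtain a u where u: "?u = a # u"
    using tm len by (cases ?u) auto
  have "0 < block_prob p ?u"
    by (rule block_prob_pos[OF order_trans[OF set_take_subset supp(1)]])
  then have "block_prob p (a # u) = 1"
    using gm block_prob_le_1[of p ?u] by (simp add: Gamma_minus_eq u)
  then have "set x1 \<subseteq> {a}" "set x2 \<subseteq> {a}"
    using block_prob_eq_1_imp_singleton supp by (metis, metis)
  then have "x1 = x2"
    using len by (metis replicate_length_same singletonD subset_iff)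
  then have "l \<le> t_plus l x1 x2"
    unfolding t_plus_def using len tm \<open>t_minus l x1 x2 \<le> l - 1\<close> by (intro le_Max_matches) auto
  then show ?thesis
    using tm \<open>t_minus l x1 x2 \<le> l - 1\<close> by linarith
qed

lemma MAP_score_T_MAP_rule_ge_candidates:
  assumes len: "length x1 = l" "length x2 = l" and supp: "set x1 \<subseteq> set_pmf p" "set x2 \<subseteq> set_pmf p"
  shows "max (MAP_score p n l x1 x2 (int (t_plus l x1 x2)))
    (max (MAP_score p n l x1 x2 (- int (t_minus l x1 x2))) (MAP_score p n l x1 x2 0))
    \<le> MAP_score p n l x1 x2 (T_MAP_rule p n l x1 x2)"
proof -
  define tp tm where "tp = t_plus l x1 x2" and "tm = t_minus l x1 x2"
  define gp gm where "gp = Gamma_plus p x2 tp" and "gm = Gamma_minus p x1 tm"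
  define N where "N = real n - (2 * real l - 1)"
  let ?score = "MAP_score p n l x1 x2"
  have rule: "T_MAP_rule p n l x1 x2 = (if max gm N \<le> gp then int tp else if max gp N \<le> gm then - int tm else 0)"
    by (simp add: T_MAP_rule_def tp_def tm_def gp_def gm_def N_def Let_def)
  have sp: "?score (int tp) = (if tp = 0 then N else gp)"
    and sm: "?score (- int tm) = (if tm = 0 then N else gm)"
    by (simp_all add: tp_def tm_def gp_def gm_def N_def MAP_score_t_plus MAP_score_t_minus)
  have s0: "?score 0 = N"
    by (simp add: N_def MAP_score_def)
  have "1 \<le> gp" "1 \<le> gm"
    unfolding gp_def gm_def Gamma_plus_eq Gamma_minus_eq
    by (intro one_le_inverse_block_prob order_trans[OF set_take_subset] supp)+
  have gp0: "tp = 0 \<Longrightarrow> gp = 1" and gm0: "tm = 0 \<Longrightarrow> gm = 1"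
    by (simp_all add: gp_def gm_def Gamma_plus_def Gamma_minus_def)
  have degenerate: "tm = 0" if "tp = 0" "gm \<le> 1"
    using t_plus_neq_0_if_Gamma_minus_le_1[OF len supp] that unfolding tp_def tm_def gm_def by blast
  consider (plus) "max gm N \<le> gp" | (minus) "\<not> max gm N \<le> gp" "max gp N \<le> gm"
    | (zero) "\<not> max gm N \<le> gp" "\<not> max gp N \<le> gm"
    by blast
  then show ?thesis
  proof cases
    case plus
    have "tp = 0 \<Longrightarrow> tm = 0"
      using plus gp0 degenerate by simp
    then show ?thesis
      using plus \<open>1 \<le> gm\<close> by (auto simp: rule sp sm s0 tp_def[symmetric] tm_def[symmetric])
  next
    case minus
    have "tm \<noteq> 0"
      using minus gm0 \<open>1 \<le> gp\<close> by force
    then show ?thesis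
      using minus by (auto simp: rule sp sm s0 tp_def[symmetric] tm_def[symmetric])
  next
    case zero
    then show ?thesis
      by (auto simp: rule sp sm s0 tp_def[symmetric] tm_def[symmetric])
  qed
qed

lemma T_MAP_rule_range:
  assumes "1 \<le> l"
  shows "T_MAP_rule p n l x1 x2 \<in> {- (int l - 1) .. int l}"
proof -
  have "t_plus l x1 x2 \<le> l" "t_minus l x1 x2 \<le> l - 1"
    unfolding t_plus_def t_minus_def by (rule Max_matches_le)+
  then show ?thesis
    using assms by (auto simp: T_MAP_rule_def Let_def)
qed

lemma T_MAP_rule_maximizes_MAP_score:
  assumes "2 * l - 1 \<le> n" "length x1 = l" "length x2 = l"
    and "set x1 \<subseteq> set_pmf p" "set x2 \<subseteq> set_pmf p" "t \<in> {- (int l - 1) .. int l}"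
  shows "MAP_score p n l x1 x2 t \<le> MAP_score p n l x1 x2 (T_MAP_rule p n l x1 x2)"
  using MAP_score_le_candidates[OF assms(1,4,5,6)] MAP_score_T_MAP_rule_ge_candidates[OF assms(2-5)]
  by (rule order_trans)

lemma MAP_objective_le_T_MAP_rule:
  assumes l: "1 \<le> l" "2 * l - 1 \<le> n" and len: "length x1 = l" "length x2 = l"
    and t: "t \<in> {- (int l - 1) .. int l}"
  shows "MAP_objective p n l t x1 x2 \<le> MAP_objective p n l (T_MAP_rule p n l x1 x2) x1 x2"
proof -
  let ?Q = "block_prob p x1 * block_prob p x2"
  have objective: "MAP_objective p n l s x1 x2 = ?Q * MAP_score p n l x1 x2 s / real n"
    if "s \<in> {- (int l - 1) .. int l}" for s
    by (rule MAP_objective_eq_MAP_score[OF l len that])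
  note rule = T_MAP_rule_range[OF l(1)]
  show ?thesis
  proof (cases "set x1 \<subseteq> set_pmf p \<and> set x2 \<subseteq> set_pmf p")
    case True
    then show ?thesis
      unfolding objective[OF t] objective[OF rule]
      using T_MAP_rule_maximizes_MAP_score[OF l(2) len _ _ t]
      by (intro divide_right_mono mult_left_mono) (simp_all add: block_prob_nonneg)
  next
    case False
    then have "?Q = 0"
      using block_prob_pos_iff block_prob_nonneg by (metis mult_eq_0_iff order_le_less)
    then show ?thesis
      unfolding objective[OF t] objective[OF rule] by auto
  qed
qed

theorem mainTheorem6:
  fixes p :: "'a::finite pmf" and n l :: nat and \<beta> :: real
  assumes "\<beta> > 0"
    and "real l = \<beta> * ln (real n)"
    and "n \<ge> 2"
    and "2 * l - 1 \<le> n"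
  shows "is_MAP_detector p n l (T_MAP_rule p n l)"
proof -
  have "0 < ln (real n)"
    using assms(3) by simp
  then have "0 < real l"
    using assms(1,2) by simp
  then have l: "1 \<le> l"
    by simp
  show ?thesis
    unfolding is_MAP_detector_def
    using T_MAP_rule_range[OF l] MAP_objective_le_T_MAP_rule[OF l assms(4)] by blast
qed

end
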